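(* Let $X$ and $Y$ be Tychonoff spaces, $\lambda\in\hat{P}(X\times Y)$, let $V_1,\dots,V_n$ be open sets in $X\times Y$ and $\varepsilon_0>0$. Then for every $\varepsilon>0$ there exist pairwise disjoint open sets $W_1,\dots,W_m\subset X\times Y$, each of the form $W_j=W_j'\times W_j''$ with $W_j'\subset X$ and $W_j''\subset Y$ open, and a number $\delta>0$ such that (i) $\lambda(V_i)-\sum_{\{j\colon W_j\subset V_i\}}\lambda(W_j)<\varepsilon$ for every $i=1,\dots,n$; (ii) $O(\lambda,W_1,\dots,W_m,\delta)\subset O(\lambda,V_1,\dots,V_n,\varepsilon_0)$; (iii) for $l=1,2$ and all $j',j''\in\{1,\dots,m\}$, either $\mathrm{pr}_l(W_{j'})\cap\mathrm{pr}_l(W_{j''})=\emptyset$ or $\mathrm{pr}_l(W_{j'})=\mathrm{pr}_l(W_{j''})$.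
   Context: For a Tychonoff space $Z$, $\hat{P}(Z)$ is the set of Radon probability measures on $Z$ (Borel probability measures $\mu$ with $\mu(A)=\sup\{\mu(K)\colon K\subset A \text{ compact}\}$ for all Borel $A$). For $\mu\in\hat{P}(Z)$, open sets $U_1,\dots,U_k\subset Z$ and $\eta>0$, $O(\mu,U_1,\dots,U_k,\eta)=\{\nu\in\hat{P}(Z)\colon \nu(U_i)>\mu(U_i)-\eta,\ i=1,\dots,k\}$; these sets form a base of the weak-* topology. $\mathrm{pr}_1,\mathrm{pr}_2$ are the coordinate projections of $X\times Y$. *)

theory Defs
  imports "HOL-Analysis.Analysis" "HOL-Probability.Probability"
begin

definition tychonoff_space :: "'a topology \<Rightarrow> bool" where
  "tychonoff_space Z \<longleftrightarrow> completely_regular_space Z \<and> Hausdorff_space Z"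

definition borel_of :: "'a topology \<Rightarrow> 'a measure" where
  "borel_of Z = sigma (topspace Z) {U. openin Z U}"

definition radon_probs :: "'a topology \<Rightarrow> 'a measure set" where
  "radon_probs Z = {\<mu>. sets \<mu> = sets (borel_of Z) \<and> prob_space \<mu> \<and>
     (\<forall>A\<in>sets \<mu>. measure \<mu> A = (SUP K\<in>{K. compactin Z K \<and> K \<subseteq> A}. measure \<mu> K))}"

definition weak_nbhd :: "'a topology \<Rightarrow> 'a measure \<Rightarrow> (nat \<Rightarrow> 'a set) \<Rightarrow> nat \<Rightarrow> real \<Rightarrow> 'a measure set" where
  "weak_nbhd Z \<mu> U k \<eta> = {\<nu> \<in> radon_probs Z. \<forall>i<k. measure \<nu> (U i) > measure \<mu> (U i) - \<eta>}"

end

theory Submission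
  imports Defs
begin

text \<open>
  Each V_i is approximated from inside by a compact set K_i (Radon property), and K_i is
  covered by finitely many open rectangles U x U' inside V_i whose sides have lambda-null
  frontiers: by complete regularity the sides can be taken to be sublevel sets {f < t} of
  continuous functions, and only countably many levels t carry positive mass. The finitely
  many sides cut X and Y, off their frontiers, into open atoms. Products of atoms are pairwise
  disjoint rectangles with equal or disjoint projections, and up to a lambda-null set each K_i
  is covered by those of them lying in V_i; this gives (i). If nu(W_j) > lambda(W_j) - delta
  for all m rectangles, summing over the rectangles inside V_i yields
  nu(V_i) > lambda(V_i) - epsilon_0 as soon as m delta is small; this gives (ii).
\<close>

lemma openin_subset_Pow_topspace: "{U. openin Z U} \<subseteq> Pow (topspace Z)"
  using openin_subset by auto

lemma space_borel_of [simp]: "space (borel_of Z) = topspace Z"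
  by (simp add: borel_of_def openin_subset_Pow_topspace)

lemma sets_borel_of_openin: "openin Z U \<Longrightarrow> U \<in> sets (borel_of Z)"
  by (simp add: borel_of_def openin_subset_Pow_topspace)

lemma sets_borel_of_closedin: "closedin Z C \<Longrightarrow> C \<in> sets (borel_of Z)"
  by (metis closedin_def sets.compl_sets sets_borel_of_openin space_borel_of Diff_Diff_Int inf.absorb_iff2)

lemma borel_measurable_continuous_map:
  assumes "continuous_map Z euclideanreal f"
  shows "f \<in> borel_measurable (borel_of Z)"
proof (rule borel_measurableI)
  fix S :: "real set" assume "open S"
  then have "openin Z {x \<in> topspace Z. f x \<in> S}"
    using openin_continuous_map_preimage[OF assms] by auto
  moreover have "f -` S \<inter> space (borel_of Z) = {x \<in> topspace Z. f x \<in> S}" by auto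
  ultimately show "f -` S \<inter> space (borel_of Z) \<in> sets (borel_of Z)"
    by (simp add: sets_borel_of_openin)
qed

lemma (in finite_measure) countable_level_sets_nonzero:
  fixes f :: "'a \<Rightarrow> 'b::t1_space"
  assumes "f \<in> borel_measurable M"
  shows "countable {t. measure M {x \<in> space M. f x = t} \<noteq> 0}"
proof -
  interpret D: finite_measure "distr M borel f"
    using assms by (rule finite_measure_distr)
  have "measure (distr M borel f) {t} = measure M {x \<in> space M. f x = t}" for t
  proof -
    have "measure (distr M borel f) {t} = measure M (f -` {t} \<inter> space M)"
      by (rule measure_distr[OF assms]) (simp add: borel_closed)
    also have "f -` {t} \<inter> space M = {x \<in> space M. f x = t}" by auto
    finally show ?thesis .
  qed
  then show ?thesis using D.countable_support by simp
qed

lemma frontier_of_sublevel_subset: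
  assumes "continuous_map X euclideanreal f"
  shows "X frontier_of {x \<in> topspace X. f x < t} \<subseteq> {x \<in> topspace X. f x = t}"
proof -
  have "openin X {x \<in> topspace X. f x < t}"
    using openin_continuous_map_preimage[OF assms, of "{..<t}"] by simp
  moreover have "closedin X {x \<in> topspace X. f x \<le> t}"
    using closedin_continuous_map_preimage[OF assms, of "{..t}"] by simp
  then have "X closure_of {x \<in> topspace X. f x < t} \<subseteq> {x \<in> topspace X. f x \<le> t}"
    by (intro closure_of_minimal) auto
  ultimately show ?thesis by (auto simp: frontier_of_openin)
qed

lemma completely_regular_space_null_frontier_nbhd:
  assumes X: "completely_regular_space X" and "finite_measure \<mu>"
    and sets: "sets \<mu> = sets (borel_of Z)" and q: "continuous_map Z X q"
    and U: "openin X U" "x \<in> U"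
  shows "\<exists>U0. openin X U0 \<and> x \<in> U0 \<and> U0 \<subseteq> U \<and>
           {z \<in> topspace Z. q z \<in> X frontier_of U0} \<in> null_sets \<mu>"
proof -
  interpret finite_measure \<mu> by fact
  obtain f where f: "continuous_map X euclideanreal f" "f x = 0" "f ` (topspace X - U) \<subseteq> {1}"
    using X U unfolding completely_regular_space_alt' by blast
  have fq: "continuous_map Z euclideanreal (f \<circ> q)"
    using q f(1) by (rule continuous_map_compose)
  have space: "space \<mu> = topspace Z"
    using sets_eq_imp_space_eq[OF sets] by simp
  have "f \<circ> q \<in> borel_measurable \<mu>"
    using borel_measurable_continuous_map[OF fq] measurable_cong_sets[OF sets refl[of "sets (borel :: real measure)"]]
    by simp
  then have "countable {t. measure \<mu> {z \<in> space \<mu>. (f \<circ> q) z = t} \<noteq> 0}"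
    by (rule countable_level_sets_nonzero)
  then obtain t where t: "0 < t" "t < 1" "measure \<mu> {z \<in> topspace Z. f (q z) = t} = 0"
    using open_minus_countable[of _ "{0<..<1::real}"] space by force
  define U0 where "U0 = {x' \<in> topspace X. f x' < t}"
  have "openin X U0"
    unfolding U0_def using openin_continuous_map_preimage[OF f(1), of "{..<t}"] by simp
  moreover have "x \<in> U0"
    unfolding U0_def using U openin_subset f(2) t(1) by auto
  moreover have "U0 \<subseteq> U"
    unfolding U0_def using f(3) t(2) by force
  moreover have "{z \<in> topspace Z. q z \<in> X frontier_of U0} \<in> null_sets \<mu>"
  proof (rule null_sets_subset)
    have "closedin Z {z \<in> topspace Z. (f \<circ> q) z \<in> {t}}"
      using fq by (rule closedin_continuous_map_preimage) simp
    then have "{z \<in> topspace Z. f (q z) = t} \<in> sets \<mu>"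
      using sets sets_borel_of_closedin by simp
    then show "{z \<in> topspace Z. f (q z) = t} \<in> null_sets \<mu>"
      using t(3) by (auto intro!: null_setsI simp: emeasure_eq_measure)
    show "{z \<in> topspace Z. q z \<in> X frontier_of U0} \<in> sets \<mu>"
      using sets sets_borel_of_closedin[OF closedin_continuous_map_preimage[OF q closedin_frontier_of]] by simp
    show "{z \<in> topspace Z. q z \<in> X frontier_of U0} \<subseteq> {z \<in> topspace Z. f (q z) = t}"
      using frontier_of_sublevel_subset[OF f(1)] unfolding U0_def by blast
  qed
  ultimately show ?thesis by blast
qed

lemma radon_probs_inner_compact:
  assumes "\<mu> \<in> radon_probs Z" "A \<in> sets \<mu>" "e > 0"
  shows "\<exists>K. compactin Z K \<and> K \<subseteq> A \<and> measure \<mu> A - measure \<mu> K < e"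
proof -
  interpret prob_space \<mu>
    using assms(1) unfolding radon_probs_def by blast
  have inner: "measure \<mu> A = (SUP K\<in>{K. compactin Z K \<and> K \<subseteq> A}. measure \<mu> K)"
    using assms(1,2) unfolding radon_probs_def by blast
  have "{K. compactin Z K \<and> K \<subseteq> A} \<noteq> {}"
    using compactin_empty by blast
  moreover have "bdd_above (measure \<mu> ` {K. compactin Z K \<and> K \<subseteq> A})"
    by (rule bdd_aboveI[of _ 1]) auto
  moreover have "measure \<mu> A - e < (SUP K\<in>{K. compactin Z K \<and> K \<subseteq> A}. measure \<mu> K)"
    using inner assms(3) by simp
  ultimately show ?thesis
    by (subst (asm) less_cSUP_iff) auto
qed

definition null_frontier_rects :: "'a topology \<Rightarrow> 'b topology \<Rightarrow> ('a \<times> 'b) measure \<Rightarrow> ('a set \<times> 'b set) set"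
  where "null_frontier_rects X Y \<mu> = {(U, U'). openin X U \<and> openin Y U' \<and>
    {p \<in> topspace (prod_topology X Y). fst p \<in> X frontier_of U \<or> snd p \<in> Y frontier_of U'} \<in> null_sets \<mu>}"

lemma null_frontier_rect_nbhd:
  assumes X: "completely_regular_space X" and Y: "completely_regular_space Y"
    and \<mu>: "finite_measure \<mu>" "sets \<mu> = sets (borel_of (prod_topology X Y))"
    and V: "openin (prod_topology X Y) V" "p \<in> V"
  shows "\<exists>(U, U') \<in> null_frontier_rects X Y \<mu>. p \<in> U \<times> U' \<and> U \<times> U' \<subseteq> V"
proof -
  let ?P = "prod_topology X Y"
  obtain U1 U1' where "openin X U1" "openin Y U1'" "fst p \<in> U1" "snd p \<in> U1'" "U1 \<times> U1' \<subseteq> V"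
    using V openin_prod_topology_alt[of X Y V] by (metis prod.collapse)
  moreover obtain U where U: "openin X U" "fst p \<in> U" "U \<subseteq> U1"
      "{z \<in> topspace ?P. fst z \<in> X frontier_of U} \<in> null_sets \<mu>"
    using completely_regular_space_null_frontier_nbhd[OF X \<mu> continuous_map_fst \<open>openin X U1\<close> \<open>fst p \<in> U1\<close>]
    by blast
  moreover obtain U' where U': "openin Y U'" "snd p \<in> U'" "U' \<subseteq> U1'"
      "{z \<in> topspace ?P. snd z \<in> Y frontier_of U'} \<in> null_sets \<mu>"
    using completely_regular_space_null_frontier_nbhd[OF Y \<mu> continuous_map_snd \<open>openin Y U1'\<close> \<open>snd p \<in> U1'\<close>]
    by blast
  moreover have "{z \<in> topspace ?P. fst z \<in> X frontier_of U \<or> snd z \<in> Y frontier_of U'} =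
      {z \<in> topspace ?P. fst z \<in> X frontier_of U} \<union> {z \<in> topspace ?P. snd z \<in> Y frontier_of U'}"
    by blast
  ultimately have "(U, U') \<in> null_frontier_rects X Y \<mu>" "p \<in> U \<times> U'" "U \<times> U' \<subseteq> V"
    unfolding null_frontier_rects_def by (auto simp: mem_Times_iff)
  then show ?thesis by blast
qed

lemma compactin_cover_null_frontier_rects:
  assumes "completely_regular_space X" "completely_regular_space Y"
    "finite_measure \<mu>" "sets \<mu> = sets (borel_of (prod_topology X Y))"
    "openin (prod_topology X Y) V" and K: "compactin (prod_topology X Y) K" "K \<subseteq> V"
  shows "\<exists>R. finite R \<and> R \<subseteq> null_frontier_rects X Y \<mu> \<and>
           (\<forall>p \<in> K. \<exists>U U'. (U, U') \<in> R \<and> p \<in> U \<times> U' \<and> U \<times> U' \<subseteq> V)"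
proof -
  define G where "G = {(U, U') \<in> null_frontier_rects X Y \<mu>. U \<times> U' \<subseteq> V}"
  have "K \<subseteq> \<Union>((\<lambda>(U, U'). U \<times> U') ` G)"
    using null_frontier_rect_nbhd[OF assms(1-5)] K(2) unfolding G_def by fast
  moreover have "\<forall>W \<in> (\<lambda>(U, U'). U \<times> U') ` G. openin (prod_topology X Y) W"
    unfolding G_def null_frontier_rects_def by (auto simp: openin_prod_Times_iff)
  ultimately obtain \<F> where "finite \<F>" "\<F> \<subseteq> (\<lambda>(U, U'). U \<times> U') ` G" "K \<subseteq> \<Union>\<F>"
    using K(1) unfolding compactin_def by (metis (no_types, lifting))
  then obtain R where "R \<subseteq> G" "finite R" "\<F> = (\<lambda>(U, U'). U \<times> U') ` R"
    using finite_subset_image[of \<F> "\<lambda>(U, U'). U \<times> U'" G] by blast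
  show ?thesis
  proof (intro exI[of _ R] conjI ballI)
    show "finite R" by fact
    show "R \<subseteq> null_frontier_rects X Y \<mu>"
      using \<open>R \<subseteq> G\<close> unfolding G_def by auto
    fix p assume "p \<in> K"
    then obtain U U' where "(U, U') \<in> R" "p \<in> U \<times> U'"
      using \<open>K \<subseteq> \<Union>\<F>\<close> \<open>\<F> = (\<lambda>(U, U'). U \<times> U') ` R\<close> by auto
    moreover have "U \<times> U' \<subseteq> V"
      using \<open>R \<subseteq> G\<close> \<open>(U, U') \<in> R\<close> unfolding G_def by auto
    ultimately show "\<exists>U U'. (U, U') \<in> R \<and> p \<in> U \<times> U' \<and> U \<times> U' \<subseteq> V" by blast
  qed
qed

definition rect_frontiers :: "'a topology \<Rightarrow> 'b topology \<Rightarrow> ('a set \<times> 'b set) set \<Rightarrow> ('a \<times> 'b) set"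
  where "rect_frontiers X Y R = {p \<in> topspace (prod_topology X Y).
    (\<exists>U \<in> fst ` R. fst p \<in> X frontier_of U) \<or> (\<exists>U' \<in> snd ` R. snd p \<in> Y frontier_of U')}"

lemma null_sets_rect_frontiers:
  assumes "finite R" "R \<subseteq> null_frontier_rects X Y \<mu>"
  shows "rect_frontiers X Y R \<in> null_sets \<mu>"
proof -
  have "rect_frontiers X Y R =
    (\<Union>r \<in> R. {p \<in> topspace (prod_topology X Y). fst p \<in> X frontier_of fst r \<or> snd p \<in> Y frontier_of snd r})"
    unfolding rect_frontiers_def by auto
  also have "\<dots> \<in> null_sets \<mu>"
    using assms unfolding null_frontier_rects_def by (intro null_sets_UN') (auto intro: countable_finite)
  finally show ?thesis .
qed

lemma exists_null_frontier_rects_inner_approx: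
  fixes V :: "nat \<Rightarrow> ('a \<times> 'b) set"
  assumes X: "tychonoff_space X" and Y: "tychonoff_space Y"
    and \<mu>: "\<mu> \<in> radon_probs (prod_topology X Y)"
    and V: "\<forall>i<n. openin (prod_topology X Y) (V i)" and "e > 0"
  obtains R K where "finite R" "R \<subseteq> null_frontier_rects X Y \<mu>"
    "\<And>i. i < n \<Longrightarrow> K i \<in> sets \<mu>" "\<And>i. i < n \<Longrightarrow> measure \<mu> (V i) - measure \<mu> (K i) < e"
    "\<And>i p. i < n \<Longrightarrow> p \<in> K i \<Longrightarrow> \<exists>U U'. (U, U') \<in> R \<and> p \<in> U \<times> U' \<and> U \<times> U' \<subseteq> V i"
proof -
  let ?P = "prod_topology X Y"
  have sets: "sets \<mu> = sets (borel_of ?P)" and "finite_measure \<mu>"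
    using \<mu> unfolding radon_probs_def by (auto simp: prob_space_def)
  have creg: "completely_regular_space X" "completely_regular_space Y"
    and "Hausdorff_space ?P"
    using X Y by (simp_all add: tychonoff_space_def Hausdorff_space_prod_topology)
  define covered where "covered i K R \<longleftrightarrow> K \<in> sets \<mu> \<and> measure \<mu> (V i) - measure \<mu> K < e \<and>
      finite R \<and> R \<subseteq> null_frontier_rects X Y \<mu> \<and>
      (\<forall>p \<in> K. \<exists>U U'. (U, U') \<in> R \<and> p \<in> U \<times> U' \<and> U \<times> U' \<subseteq> V i)" for i K R
  have "\<exists>K R. covered i K R" if i: "i < n" for i
  proof -
    have Vi: "openin ?P (V i)" using V i by blast
    have "V i \<in> sets \<mu>" using sets sets_borel_of_openin[OF Vi] by simp
    then obtain K where K: "compactin ?P K" "K \<subseteq> V i" "measure \<mu> (V i) - measure \<mu> K < e"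
      using radon_probs_inner_compact[OF \<mu> _ \<open>e > 0\<close>] by blast
    moreover have "K \<in> sets \<mu>"
      using sets sets_borel_of_closedin compactin_imp_closedin[OF \<open>Hausdorff_space ?P\<close> K(1)] by simp
    moreover have "\<exists>R. finite R \<and> R \<subseteq> null_frontier_rects X Y \<mu> \<and>
        (\<forall>p \<in> K. \<exists>U U'. (U, U') \<in> R \<and> p \<in> U \<times> U' \<and> U \<times> U' \<subseteq> V i)"
      by (rule compactin_cover_null_frontier_rects[OF creg \<open>finite_measure \<mu>\<close> sets Vi K(1,2)])
    ultimately show ?thesis unfolding covered_def by blast
  qed
  then obtain K where "\<And>i. i < n \<Longrightarrow> \<exists>R. covered i (K i) R"
    by metis
  then obtain R where "\<And>i. i < n \<Longrightarrow> covered i (K i) (R i)"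
    by metis
  then have KR: "K i \<in> sets \<mu>" "measure \<mu> (V i) - measure \<mu> (K i) < e" "finite (R i)"
      "R i \<subseteq> null_frontier_rects X Y \<mu>" "\<forall>p \<in> K i. \<exists>U U'. (U, U') \<in> R i \<and> p \<in> U \<times> U' \<and> U \<times> U' \<subseteq> V i"
    if "i < n" for i
    using that by (simp_all add: covered_def)
  show ?thesis
  proof (rule that[of "\<Union>i<n. R i" K])
    show "finite (\<Union>i<n. R i)"
      using KR(3) by (intro finite_UN_I) auto
    show "(\<Union>i<n. R i) \<subseteq> null_frontier_rects X Y \<mu>"
      using KR(4) by blast
    fix i assume "i < n"
    then show "K i \<in> sets \<mu>" "measure \<mu> (V i) - measure \<mu> (K i) < e"
      using KR(1,2) by auto
    fix p assume "p \<in> K i"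
    then obtain U U' where "(U, U') \<in> R i" "p \<in> U \<times> U'" "U \<times> U' \<subseteq> V i"
      using KR(5)[OF \<open>i < n\<close>] by meson
    then show "\<exists>U U'. (U, U') \<in> (\<Union>i<n. R i) \<and> p \<in> U \<times> U' \<and> U \<times> U' \<subseteq> V i"
      using \<open>i < n\<close> by (intro exI[of _ U] exI[of _ U']) auto
  qed
qed

text \<open>Points are kept away from the closures, not merely from the sets U \<in> \<U> - S, so that atoms are
  open; the price is that points on the frontiers lie in no atom.\<close>
definition atom :: "'a topology \<Rightarrow> 'a set set \<Rightarrow> 'a set set \<Rightarrow> 'a set" where
  "atom X \<U> S = {x \<in> topspace X. (\<forall>U \<in> S. x \<in> U) \<and> (\<forall>U \<in> \<U> - S. x \<notin> X closure_of U)}"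

definition atoms :: "'a topology \<Rightarrow> 'a set set \<Rightarrow> 'a set set" where
  "atoms X \<U> = atom X \<U> ` Pow \<U>"

lemma finite_atoms: "finite \<U> \<Longrightarrow> finite (atoms X \<U>)"
  by (simp add: atoms_def)

lemma openin_atom:
  assumes "finite \<U>" "\<And>U. U \<in> \<U> \<Longrightarrow> openin X U" "S \<subseteq> \<U>"
  shows "openin X (atom X \<U> S)"
proof -
  have "atom X \<U> S = topspace X \<inter> \<Inter>(S \<union> (\<lambda>U. topspace X - X closure_of U) ` (\<U> - S))"
    unfolding atom_def by auto
  also have "openin X \<dots>"
    using assms by (intro openin_Int_Inter) (auto intro: finite_subset)
  finally show ?thesis .
qed

lemma openin_atoms:
  "finite \<U> \<Longrightarrow> (\<And>U. U \<in> \<U> \<Longrightarrow> openin X U) \<Longrightarrow> A \<in> atoms X \<U> \<Longrightarrow> openin X A"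
  unfolding atoms_def using openin_atom by blast

lemma disjoint_atoms: "disjoint (atoms X \<U>)"
proof (rule pairwiseI)
  fix A B assume "A \<in> atoms X \<U>" "B \<in> atoms X \<U>" "A \<noteq> B"
  then obtain S T where "S \<subseteq> \<U>" "T \<subseteq> \<U>" "S \<noteq> T" "A = atom X \<U> S" "B = atom X \<U> T"
    unfolding atoms_def by blast
  then obtain U where "U \<in> \<U>" "U \<in> S \<and> U \<notin> T \<or> U \<in> T \<and> U \<notin> S"
    by blast
  moreover have "topspace X \<inter> U \<subseteq> X closure_of U"
    by (rule closure_of_subset_Int)
  ultimately show "disjnt A B"
    unfolding disjnt_def \<open>A = atom X \<U> S\<close> \<open>B = atom X \<U> T\<close> atom_def by blast
qed

lemma atoms_cover_off_frontiers:
  assumes "x \<in> topspace X" "\<And>U. U \<in> \<U> \<Longrightarrow> openin X U" "\<And>U. U \<in> \<U> \<Longrightarrow> x \<notin> X frontier_of U"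
  shows "\<exists>A \<in> atoms X \<U>. x \<in> A \<and> (\<forall>U \<in> \<U>. x \<in> U \<longrightarrow> A \<subseteq> U)"
proof (intro bexI conjI ballI impI)
  let ?S = "{U \<in> \<U>. x \<in> U}"
  show "atom X \<U> ?S \<in> atoms X \<U>"
    unfolding atoms_def by blast
  have "x \<notin> X closure_of U" if "U \<in> \<U> - ?S" for U
  proof -
    have "U \<in> \<U>" "x \<notin> U" using that by auto
    moreover have "X closure_of U = U \<union> X frontier_of U"
      using interior_of_union_frontier_of[of X U] interior_of_openin[OF assms(2)[OF \<open>U \<in> \<U>\<close>]] by simp
    ultimately show ?thesis using assms(3) by auto
  qed
  then show "x \<in> atom X \<U> ?S"
    unfolding atom_def using assms(1) by auto
  show "atom X \<U> ?S \<subseteq> U" if "U \<in> \<U>" "x \<in> U" for U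
    unfolding atom_def using that by auto
qed

lemma fst_image_Times_disjoint_or_eq:
  "A \<inter> A' = {} \<or> A = A' \<Longrightarrow> fst ` (A \<times> B) \<inter> fst ` (A' \<times> B') = {} \<or> fst ` (A \<times> B) = fst ` (A' \<times> B')"
  by (auto simp: fst_image_times)

lemma snd_image_Times_disjoint_or_eq:
  "B \<inter> B' = {} \<or> B = B' \<Longrightarrow> snd ` (A \<times> B) \<inter> snd ` (A' \<times> B') = {} \<or> snd ` (A \<times> B) = snd ` (A' \<times> B')"
  by (auto simp: snd_image_times)

lemma atoms_Times_cover_off_rect_frontiers:
  assumes R_open: "\<And>U U'. (U, U') \<in> R \<Longrightarrow> openin X U \<and> openin Y U'"
    and UU': "(U, U') \<in> R" "(x, y) \<in> U \<times> U'" and "(x, y) \<notin> rect_frontiers X Y R"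
  obtains A B where "A \<in> atoms X (fst ` R)" "B \<in> atoms Y (snd ` R)" "(x, y) \<in> A \<times> B" "A \<times> B \<subseteq> U \<times> U'"
proof -
  have fst_R_open: "\<And>U. U \<in> fst ` R \<Longrightarrow> openin X U" and snd_R_open: "\<And>U'. U' \<in> snd ` R \<Longrightarrow> openin Y U'"
    using R_open by force+
  have xy: "x \<in> topspace X" "y \<in> topspace Y" "x \<in> U" "y \<in> U'"
    using UU' R_open[OF UU'(1)] openin_subset by blast+
  have "U \<in> fst ` R" "U' \<in> snd ` R"
    using UU'(1) by force+
  have "x \<notin> X frontier_of U0" if "U0 \<in> fst ` R" for U0
    using \<open>(x, y) \<notin> rect_frontiers X Y R\<close> xy(1,2) that unfolding rect_frontiers_def by auto
  then obtain A where A: "A \<in> atoms X (fst ` R)" "x \<in> A" "\<forall>U0 \<in> fst ` R. x \<in> U0 \<longrightarrow> A \<subseteq> U0"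
    using atoms_cover_off_frontiers[OF xy(1) fst_R_open] by meson
  have "y \<notin> Y frontier_of U0'" if "U0' \<in> snd ` R" for U0'
    using \<open>(x, y) \<notin> rect_frontiers X Y R\<close> xy(1,2) that unfolding rect_frontiers_def by auto
  then obtain B where B: "B \<in> atoms Y (snd ` R)" "y \<in> B" "\<forall>U0' \<in> snd ` R. y \<in> U0' \<longrightarrow> B \<subseteq> U0'"
    using atoms_cover_off_frontiers[OF xy(2) snd_R_open] by meson
  have "A \<times> B \<subseteq> U \<times> U'"
    using A(3) B(3) \<open>U \<in> fst ` R\<close> \<open>U' \<in> snd ` R\<close> xy(3,4) by blast
  then show ?thesis
    using that[OF A(1) B(1)] A(2) B(2) by blast
qed

lemma enumerate_disjoint_grid:
  assumes "finite \<A>" "finite \<B>" "disjoint \<A>" "disjoint \<B>"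
  obtains m :: nat and W1 W2 where "\<forall>j<m. W1 j \<in> \<A> \<and> W2 j \<in> \<B>"
    "disjoint_family_on (\<lambda>j. W1 j \<times> W2 j) {..<m}"
    "\<forall>A \<in> \<A>. \<forall>B \<in> \<B>. \<exists>j<m. W1 j = A \<and> W2 j = B"
proof -
  let ?m = "card (\<A> \<times> \<B>)"
  obtain h where h: "bij_betw h {..<?m} (\<A> \<times> \<B>)"
    using ex_bij_betw_nat_finite[of "\<A> \<times> \<B>"] assms(1,2) by (auto simp: atLeast0LessThan)
  define W1 W2 where "W1 j = fst (h j)" and "W2 j = snd (h j)" for j
  have W: "W1 j \<in> \<A>" "W2 j \<in> \<B>" if "j < ?m" for j
    using bij_betw_apply[OF h] that unfolding W1_def W2_def by (auto simp: mem_Times_iff)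
  show ?thesis
  proof (rule that[of ?m W1 W2])
    show "\<forall>j<?m. W1 j \<in> \<A> \<and> W2 j \<in> \<B>"
      using W by blast
    show "disjoint_family_on (\<lambda>j. W1 j \<times> W2 j) {..<?m}"
    proof (unfold disjoint_family_on_def, intro ballI impI)
      fix j j' assume j: "j \<in> {..<?m}" "j' \<in> {..<?m}" "j \<noteq> j'"
      then have "h j \<noteq> h j'"
        using bij_betw_imp_inj_on[OF h] by (auto dest: inj_onD)
      then have "W1 j \<noteq> W1 j' \<or> W2 j \<noteq> W2 j'"
        unfolding W1_def W2_def by (auto simp: prod_eq_iff)
      moreover have "W1 j \<in> \<A>" "W1 j' \<in> \<A>" "W2 j \<in> \<B>" "W2 j' \<in> \<B>"
        using W j(1,2) by auto
      ultimately have "disjnt (W1 j) (W1 j') \<or> disjnt (W2 j) (W2 j')"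
        using assms(3,4) by (metis pairwiseD)
      then show "W1 j \<times> W2 j \<inter> W1 j' \<times> W2 j' = {}"
        by (auto simp: disjnt_def)
    qed
    show "\<forall>A \<in> \<A>. \<forall>B \<in> \<B>. \<exists>j<?m. W1 j = A \<and> W2 j = B"
    proof (intro ballI)
      fix A B assume "A \<in> \<A>" "B \<in> \<B>"
      then have "(A, B) \<in> h ` {..<?m}"
        using bij_betw_imp_surj_on[OF h] by simp
      then obtain j where "j < ?m" "h j = (A, B)"
        by auto
      then show "\<exists>j<?m. W1 j = A \<and> W2 j = B"
        unfolding W1_def W2_def by force
    qed
  qed
qed

lemma (in finite_measure) measure_le_sum_if_ae_covered:
  assumes "K \<in> sets M" "N \<in> null_sets M" "finite J" "\<And>j. j \<in> J \<Longrightarrow> W j \<in> sets M"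
    and "K \<subseteq> N \<union> (\<Union>j\<in>J. W j)"
  shows "measure M K \<le> (\<Sum>j\<in>J. measure M (W j))"
proof -
  have "(\<Union>j\<in>J. W j) \<in> sets M"
    using assms(3,4) by (intro sets.finite_UN)
  then have "measure M K \<le> measure M ((\<Union>j\<in>J. W j) \<union> N)"
    using assms(2,5) by (intro finite_measure_mono) auto
  also have "\<dots> = measure M (\<Union>j\<in>J. W j)"
    using assms by (intro measure_Un_null_set) auto
  also have "\<dots> \<le> (\<Sum>j\<in>J. measure M (W j))"
    using assms by (intro finite_measure_subadditive_finite) auto
  finally show ?thesis .
qed

lemma exists_weak_nbhd_subset:
  assumes W: "disjoint_family_on W {..<m}" "\<forall>j<m. openin Z (W j)"
    and V: "\<forall>i<n. openin Z (V i)"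
    and approx: "\<forall>i<n. measure \<mu> (V i) - (\<Sum>j\<in>{j. j < m \<and> W j \<subseteq> V i}. measure \<mu> (W j)) < \<eta>"
    and "\<eta> < \<epsilon>"
  obtains \<delta> where "\<delta> > 0" "weak_nbhd Z \<mu> W m \<delta> \<subseteq> weak_nbhd Z \<mu> V n \<epsilon>"
proof -
  define \<delta> where "\<delta> = (\<epsilon> - \<eta>) / (real m + 1)"
  have "\<delta> > 0" "(real m + 1) * \<delta> = \<epsilon> - \<eta>"
    using \<open>\<eta> < \<epsilon>\<close> unfolding \<delta>_def by (simp_all add: field_simps)
  have "weak_nbhd Z \<mu> W m \<delta> \<subseteq> weak_nbhd Z \<mu> V n \<epsilon>"
  proof
    fix \<nu> assume "\<nu> \<in> weak_nbhd Z \<mu> W m \<delta>"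
    then have \<nu>: "\<nu> \<in> radon_probs Z" "\<And>j. j < m \<Longrightarrow> measure \<mu> (W j) - \<delta> < measure \<nu> (W j)"
      unfolding weak_nbhd_def by auto
    then have sets: "sets \<nu> = sets (borel_of Z)" and "prob_space \<nu>"
      unfolding radon_probs_def by auto
    interpret prob_space \<nu> by fact
    have "measure \<mu> (V i) - \<epsilon> < measure \<nu> (V i)" if "i < n" for i
    proof -
      define J where "J = {j. j < m \<and> W j \<subseteq> V i}"
      have J: "J \<subseteq> {..<m}" "finite J" unfolding J_def by auto
      have WJ: "W j \<in> sets \<nu>" if "j \<in> J" for j
        using that J(1) W(2) sets sets_borel_of_openin by blast
      have "(\<Sum>j\<in>J. measure \<mu> (W j)) - real m * \<delta> \<le> (\<Sum>j\<in>J. measure \<mu> (W j)) - real (card J) * \<delta>"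
        using card_mono[OF _ J(1)] \<open>\<delta> > 0\<close> by (simp add: mult_right_mono)
      also have "\<dots> = (\<Sum>j\<in>J. measure \<mu> (W j) - \<delta>)"
        by (simp add: sum_subtractf)
      also have "\<dots> \<le> (\<Sum>j\<in>J. measure \<nu> (W j))"
        using \<nu>(2) J(1) by (intro sum_mono) (auto intro: less_imp_le)
      also have "\<dots> = measure \<nu> (\<Union>j\<in>J. W j)"
        using WJ J(2) disjoint_family_on_mono[OF J(1) W(1)]
        by (intro finite_measure_finite_Union[symmetric]) auto
      also have "\<dots> \<le> measure \<nu> (V i)"
        using V sets sets_borel_of_openin \<open>i < n\<close> unfolding J_def by (intro finite_measure_mono) auto
      finally show ?thesis
        using approx \<open>i < n\<close> \<open>(real m + 1) * \<delta> = \<epsilon> - \<eta>\<close> \<open>\<delta> > 0\<close> unfolding J_def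
        by (force simp: algebra_simps)
    qed
    then show "\<nu> \<in> weak_nbhd Z \<mu> V n \<epsilon>"
      unfolding weak_nbhd_def using \<nu>(1) by auto
  qed
  then show ?thesis
    using that \<open>\<delta> > 0\<close> by blast
qed

lemma exists_rect_partition_inner_approx:
  fixes V :: "nat \<Rightarrow> ('a \<times> 'b) set"
  assumes X: "tychonoff_space X" and Y: "tychonoff_space Y"
    and \<mu>: "\<mu> \<in> radon_probs (prod_topology X Y)"
    and V: "\<forall>i<n. openin (prod_topology X Y) (V i)" and "e > 0"
  obtains m :: nat and W1 W2 where
    "\<forall>j<m. openin X (W1 j) \<and> openin Y (W2 j)"
    "disjoint_family_on (\<lambda>j. W1 j \<times> W2 j) {..<m}"
    "\<forall>j<m. \<forall>j'<m. (W1 j \<inter> W1 j' = {} \<or> W1 j = W1 j') \<and> (W2 j \<inter> W2 j' = {} \<or> W2 j = W2 j')"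
    "\<forall>i<n. measure \<mu> (V i) - (\<Sum>j\<in>{j. j < m \<and> W1 j \<times> W2 j \<subseteq> V i}. measure \<mu> (W1 j \<times> W2 j)) < e"
proof -
  let ?P = "prod_topology X Y"
  have sets: "sets \<mu> = sets (borel_of ?P)" and "finite_measure \<mu>"
    using \<mu> unfolding radon_probs_def by (auto simp: prob_space_def)
  interpret finite_measure \<mu> by fact
  obtain R K where R: "finite R" "R \<subseteq> null_frontier_rects X Y \<mu>"
    and K: "\<And>i. i < n \<Longrightarrow> K i \<in> sets \<mu>" "\<And>i. i < n \<Longrightarrow> measure \<mu> (V i) - measure \<mu> (K i) < e"
      "\<And>i p. i < n \<Longrightarrow> p \<in> K i \<Longrightarrow> \<exists>U U'. (U, U') \<in> R \<and> p \<in> U \<times> U' \<and> U \<times> U' \<subseteq> V i"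
    using exists_null_frontier_rects_inner_approx[OF X Y \<mu> V \<open>e > 0\<close>] by blast
  have R_open: "openin X U \<and> openin Y U'" if "(U, U') \<in> R" for U U'
    using that R(2) unfolding null_frontier_rects_def by auto
  have fst_R_open: "\<And>U. U \<in> fst ` R \<Longrightarrow> openin X U" and snd_R_open: "\<And>U'. U' \<in> snd ` R \<Longrightarrow> openin Y U'"
    using R_open by auto
  have fin: "finite (atoms X (fst ` R))" "finite (atoms Y (snd ` R))"
    using R(1) by (simp_all add: finite_atoms)
  obtain m :: nat and W1 W2 where W: "\<forall>j<m. W1 j \<in> atoms X (fst ` R) \<and> W2 j \<in> atoms Y (snd ` R)"
    and disj: "disjoint_family_on (\<lambda>j. W1 j \<times> W2 j) {..<m}"
    and onto: "\<forall>A \<in> atoms X (fst ` R). \<forall>B \<in> atoms Y (snd ` R). \<exists>j<m. W1 j = A \<and> W2 j = B"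
    by (rule enumerate_disjoint_grid[OF fin disjoint_atoms disjoint_atoms])
  have W_open: "\<forall>j<m. openin X (W1 j) \<and> openin Y (W2 j)"
  proof (intro allI impI conjI)
    fix j assume "j < m"
    then show "openin X (W1 j)" "openin Y (W2 j)"
      using W openin_atoms[OF finite_imageI[OF R(1)] fst_R_open] openin_atoms[OF finite_imageI[OF R(1)] snd_R_open]
      by blast+
  qed
  have N: "rect_frontiers X Y R \<in> null_sets \<mu>"
    by (rule null_sets_rect_frontiers[OF R])
  have cover: "K i \<subseteq> rect_frontiers X Y R \<union> (\<Union>j\<in>{j. j < m \<and> W1 j \<times> W2 j \<subseteq> V i}. W1 j \<times> W2 j)"
    if "i < n" for i
  proof
    fix p assume "p \<in> K i"
    show "p \<in> rect_frontiers X Y R \<union> (\<Union>j\<in>{j. j < m \<and> W1 j \<times> W2 j \<subseteq> V i}. W1 j \<times> W2 j)"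
    proof (cases "p \<in> rect_frontiers X Y R")
      case False
      obtain U U' where UU': "(U, U') \<in> R" "p \<in> U \<times> U'" "U \<times> U' \<subseteq> V i"
        using K(3)[OF \<open>i < n\<close> \<open>p \<in> K i\<close>] by blast
      obtain x y where p: "p = (x, y)" by (cases p)
      obtain A B where "A \<in> atoms X (fst ` R)" "B \<in> atoms Y (snd ` R)" "(x, y) \<in> A \<times> B" "A \<times> B \<subseteq> U \<times> U'"
        using atoms_Times_cover_off_rect_frontiers[OF R_open UU'(1) UU'(2)[unfolded p] False[unfolded p]] by blast
      moreover obtain j where "j < m" "W1 j = A" "W2 j = B"
        using onto calculation(1,2) by blast
      ultimately show ?thesis
        using UU'(3) unfolding p by blast
    qed simp
  qed
  show ?thesis
  proof (rule that[OF W_open disj])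
    show "\<forall>j<m. \<forall>j'<m. (W1 j \<inter> W1 j' = {} \<or> W1 j = W1 j') \<and> (W2 j \<inter> W2 j' = {} \<or> W2 j = W2 j')"
      using W disjointD[OF disjoint_atoms[of X "fst ` R"]] disjointD[OF disjoint_atoms[of Y "snd ` R"]]
      by metis
    have W_sets: "W1 j \<times> W2 j \<in> sets \<mu>" if "j < m" for j
    proof -
      have "openin ?P (W1 j \<times> W2 j)"
        using W_open that by (simp add: openin_prod_Times_iff)
      then show ?thesis
        using sets by (simp add: sets_borel_of_openin)
    qed
    show "\<forall>i<n. measure \<mu> (V i) - (\<Sum>j\<in>{j. j < m \<and> W1 j \<times> W2 j \<subseteq> V i}. measure \<mu> (W1 j \<times> W2 j)) < e"
    proof (intro allI impI)
      fix i assume "i < n"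
      have "measure \<mu> (K i) \<le> (\<Sum>j\<in>{j. j < m \<and> W1 j \<times> W2 j \<subseteq> V i}. measure \<mu> (W1 j \<times> W2 j))"
        using K(1)[OF \<open>i < n\<close>] N cover[OF \<open>i < n\<close>] W_sets
        by (intro measure_le_sum_if_ae_covered) auto
      then show "measure \<mu> (V i) - (\<Sum>j\<in>{j. j < m \<and> W1 j \<times> W2 j \<subseteq> V i}. measure \<mu> (W1 j \<times> W2 j)) < e"
        using K(2)[OF \<open>i < n\<close>] by linarith
    qed
  qed
qed

theorem lemma6:
  fixes X :: "'a topology" and Y :: "'b topology"
    and lam :: "('a \<times> 'b) measure"
    and V :: "nat \<Rightarrow> ('a \<times> 'b) set" and n :: nat and \<epsilon>0 :: real
  assumes "tychonoff_space X" and "tychonoff_space Y"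
    and "lam \<in> radon_probs (prod_topology X Y)"
    and "\<forall>i<n. openin (prod_topology X Y) (V i)"
    and "\<epsilon>0 > 0"
  shows "\<forall>\<epsilon>>0. \<exists>(m::nat) (W1::nat \<Rightarrow> 'a set) (W2::nat \<Rightarrow> 'b set) \<delta>::real.
     (\<forall>j<m. openin X (W1 j) \<and> openin Y (W2 j)) \<and>
     (\<forall>j<m. \<forall>j'<m. j \<noteq> j' \<longrightarrow> (W1 j \<times> W2 j) \<inter> (W1 j' \<times> W2 j') = {}) \<and>
     \<delta> > 0 \<and>
     (\<forall>i<n. measure lam (V i) - (\<Sum>j\<in>{j. j < m \<and> W1 j \<times> W2 j \<subseteq> V i}. measure lam (W1 j \<times> W2 j)) < \<epsilon>) \<and>
     weak_nbhd (prod_topology X Y) lam (\<lambda>j. W1 j \<times> W2 j) m \<delta>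
       \<subseteq> weak_nbhd (prod_topology X Y) lam V n \<epsilon>0 \<and>
     (\<forall>j<m. \<forall>j'<m.
        (fst ` (W1 j \<times> W2 j) \<inter> fst ` (W1 j' \<times> W2 j') = {} \<or> fst ` (W1 j \<times> W2 j) = fst ` (W1 j' \<times> W2 j')) \<and>
        (snd ` (W1 j \<times> W2 j) \<inter> snd ` (W1 j' \<times> W2 j') = {} \<or> snd ` (W1 j \<times> W2 j) = snd ` (W1 j' \<times> W2 j')))"
proof (intro allI impI)
  let ?P = "prod_topology X Y"
  fix \<epsilon> :: real assume "\<epsilon> > 0"
  define e where "e = min \<epsilon> (\<epsilon>0 / 2)"
  have "0 < e" "e \<le> \<epsilon>" "e < \<epsilon>0"
    using \<open>\<epsilon> > 0\<close> assms(5) by (auto simp: e_def)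
  obtain m :: nat and W1 W2 where W_open: "\<forall>j<m. openin X (W1 j) \<and> openin Y (W2 j)"
    and disj: "disjoint_family_on (\<lambda>j. W1 j \<times> W2 j) {..<m}"
    and disj_or_eq: "\<forall>j<m. \<forall>j'<m. (W1 j \<inter> W1 j' = {} \<or> W1 j = W1 j') \<and> (W2 j \<inter> W2 j' = {} \<or> W2 j = W2 j')"
    and approx: "\<forall>i<n. measure lam (V i) - (\<Sum>j\<in>{j. j < m \<and> W1 j \<times> W2 j \<subseteq> V i}. measure lam (W1 j \<times> W2 j)) < e"
    by (rule exists_rect_partition_inner_approx[OF assms(1-4) \<open>0 < e\<close>])
  have "\<forall>j<m. openin ?P (W1 j \<times> W2 j)"
    using W_open by (simp add: openin_prod_Times_iff)
  then obtain \<delta> where "\<delta> > 0" "weak_nbhd ?P lam (\<lambda>j. W1 j \<times> W2 j) m \<delta> \<subseteq> weak_nbhd ?P lam V n \<epsilon>0"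
    by (rule exists_weak_nbhd_subset[OF disj _ assms(4) approx \<open>e < \<epsilon>0\<close>])
  moreover have "\<forall>i<n. measure lam (V i) - (\<Sum>j\<in>{j. j < m \<and> W1 j \<times> W2 j \<subseteq> V i}. measure lam (W1 j \<times> W2 j)) < \<epsilon>"
    using approx \<open>e \<le> \<epsilon>\<close> by force
  moreover have "\<forall>j<m. \<forall>j'<m. j \<noteq> j' \<longrightarrow> (W1 j \<times> W2 j) \<inter> (W1 j' \<times> W2 j') = {}"
    using disj unfolding disjoint_family_on_def by simp
  moreover have "\<forall>j<m. \<forall>j'<m.
        (fst ` (W1 j \<times> W2 j) \<inter> fst ` (W1 j' \<times> W2 j') = {} \<or> fst ` (W1 j \<times> W2 j) = fst ` (W1 j' \<times> W2 j')) \<and>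
        (snd ` (W1 j \<times> W2 j) \<inter> snd ` (W1 j' \<times> W2 j') = {} \<or> snd ` (W1 j \<times> W2 j) = snd ` (W1 j' \<times> W2 j'))"
    using disj_or_eq by (metis fst_image_Times_disjoint_or_eq snd_image_Times_disjoint_or_eq)
  ultimately show "\<exists>(m::nat) (W1::nat \<Rightarrow> 'a set) (W2::nat \<Rightarrow> 'b set) \<delta>::real.
     (\<forall>j<m. openin X (W1 j) \<and> openin Y (W2 j)) \<and>
     (\<forall>j<m. \<forall>j'<m. j \<noteq> j' \<longrightarrow> (W1 j \<times> W2 j) \<inter> (W1 j' \<times> W2 j') = {}) \<and>
     \<delta> > 0 \<and>
     (\<forall>i<n. measure lam (V i) - (\<Sum>j\<in>{j. j < m \<and> W1 j \<times> W2 j \<subseteq> V i}. measure lam (W1 j \<times> W2 j)) < \<epsilon>) \<and>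
     weak_nbhd (prod_topology X Y) lam (\<lambda>j. W1 j \<times> W2 j) m \<delta>
       \<subseteq> weak_nbhd (prod_topology X Y) lam V n \<epsilon>0 \<and>
     (\<forall>j<m. \<forall>j'<m.
        (fst ` (W1 j \<times> W2 j) \<inter> fst ` (W1 j' \<times> W2 j') = {} \<or> fst ` (W1 j \<times> W2 j) = fst ` (W1 j' \<times> W2 j')) \<and>
        (snd ` (W1 j \<times> W2 j) \<inter> snd ` (W1 j' \<times> W2 j') = {} \<or> snd ` (W1 j \<times> W2 j) = snd ` (W1 j' \<times> W2 j')))"
    using W_open by (intro exI[of _ m] exI[of _ W1] exI[of _ W2] exI[of _ \<delta>] conjI)
qed

end
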